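(* For $n\ge 2$, the number of shallow Grassmannian permutations in $S_n$ (shallow permutations with at most one descent) equals $\binom{n+1}{3}+1$.
   Context: For $\pi\in S_n$: $D(\pi)=\sum_{i}|\pi_i-i|$, $I(\pi)$ is the number of inversions, $T(\pi)=n-\mathrm{cyc}(\pi)$ with $\mathrm{cyc}$ the number of cycles in the disjoint cycle decomposition; $\pi$ is shallow if $I(\pi)+T(\pi)=D(\pi)$. A descent of $\pi$ is an index $i\in[n-1]$ with $\pi_i>\pi_{i+1}$; a permutation is Grassmannian if it has at most one descent. *)

theory Defs
  imports "HOL-Combinatorics.Combinatorics"
begin

text \<open>Permutations of [n] = {1..n} are functions p :: nat => nat with p permutes {1..n}.\<close>

definition total_displacement :: "nat \<Rightarrow> (nat \<Rightarrow> nat) \<Rightarrow> nat" where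
  "total_displacement n p = (\<Sum>i\<in>{1..n}. nat \<bar>int (p i) - int i\<bar>)"

definition inversions :: "nat \<Rightarrow> (nat \<Rightarrow> nat) \<Rightarrow> nat" where
  "inversions n p = card {(i, j). i \<in> {1..n} \<and> j \<in> {1..n} \<and> i < j \<and> p i > p j}"

text \<open>Number of cycles in the disjoint cycle decomposition (fixed points count as cycles).\<close>
definition num_cycles :: "nat \<Rightarrow> (nat \<Rightarrow> nat) \<Rightarrow> nat" where
  "num_cycles n p = card (orbit p ` {1..n})"

definition reflection_length :: "nat \<Rightarrow> (nat \<Rightarrow> nat) \<Rightarrow> nat" where
  "reflection_length n p = n - num_cycles n p"

definition shallow :: "nat \<Rightarrow> (nat \<Rightarrow> nat) \<Rightarrow> bool" where
  "shallow n p \<longleftrightarrow> inversions n p + reflection_length n p = total_displacement n p"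

definition descents :: "nat \<Rightarrow> (nat \<Rightarrow> nat) \<Rightarrow> nat set" where
  "descents n p = {i. 1 \<le> i \<and> i \<le> n - 1 \<and> p i > p (Suc i)}"

definition grassmannian :: "nat \<Rightarrow> (nat \<Rightarrow> nat) \<Rightarrow> bool" where
  "grassmannian n p \<longleftrightarrow> card (descents n p) \<le> 1"

end

theory Submission
  imports Defs
begin

text \<open>
  A Grassmannian permutation \<open>p\<close> with its descent at \<open>k\<close> is increasing on \<open>[1, k]\<close> and on
  \<open>[k+1, n]\<close>, so every inversion \<open>(i, j)\<close> has \<open>i \<le> k < j\<close>. Counting them row by row gives
  \<open>p i - i\<close> for \<open>i \<le> k\<close>, and column by column \<open>j - p j\<close> for \<open>j > k\<close>; hence \<open>D = 2 I\<close>
  and \<open>p\<close> is shallow iff \<open>T = I\<close>. The inversions through the positions \<open>k, k+1\<close> number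
  \<open>p k - p (k+1)\<close>, while every point outside \<open>[p (k+1), p k]\<close> is fixed, so
  \<open>T \<le> p k - p (k+1) \<le> I\<close>. Thus a shallow \<open>p\<close> has no further inversions, which pins it
  down as the cycle determined by the triple \<open>p (k+1) \<le> k < p k\<close>. Conversely each such cycle
  is shallow, and there are \<open>C(n+1, 3)\<close> triples; the identity adds one.
\<close>

lemma card_permutes_preimage:
  assumes "p permutes S" and "B \<subseteq> S"
  shows "card {l\<in>S. p l \<in> B} = card B"
proof -
  have "{l\<in>S. p l \<in> B} = p -` B"
    using assms permutes_not_in by fastforce
  then show ?thesis
    using card_vimage_inj[of p B] permutes_inj[OF assms(1)] permutes_surj[OF assms(1)] by simp
qed

lemma card_permutes_less:
  assumes "p permutes {1..n}" and "v \<in> {1..n}"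
  shows "card {l\<in>{1..n}. p l < v} = v - 1"
proof -
  have "{l\<in>{1..n}. p l < v} = {l\<in>{1..n}. p l \<in> {1..<v}}"
    using permutes_in_image[OF assms(1)] by fastforce
  also have "card \<dots> = card {1..<v}"
    by (rule card_permutes_preimage) (use assms in auto)
  finally show ?thesis by simp
qed

lemma card_permutes_greater:
  assumes "p permutes {1..n}" and "v \<in> {1..n}"
  shows "card {l\<in>{1..n}. v < p l} = n - v"
proof -
  have "{l\<in>{1..n}. v < p l} = {l\<in>{1..n}. p l \<in> {v<..n}}"
    using permutes_in_image[OF assms(1)] assms(2) by fastforce
  also have "card \<dots> = card {v<..n}"
    by (rule card_permutes_preimage) (use assms in auto)
  finally show ?thesis by simp
qed

lemma inj_invariant_not_in:
  assumes "inj p" and "finite A" and "p ` A \<subseteq> A" and "i \<notin> A"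
  shows "p i \<notin> A"
proof
  assume "p i \<in> A"
  also have "A = p ` A"
    using endo_inj_surj[OF assms(2,3)] inj_on_subset[OF assms(1)] by simp
  finally show False
    using assms(1,4) by (auto dest: injD)
qed

lemma num_cycles_ge:
  assumes "p permutes {1..n}" and "a \<in> A" and "A \<subseteq> {1..n}"
    and fixed: "\<And>i. i \<in> {1..n} - A \<Longrightarrow> p i = i"
  shows "Suc (card ({1..n} - A)) \<le> num_cycles n p"
proof -
  have "permutation p"
    using assms(1) by (auto simp: permutation_permutes)
  then have self: "a \<in> orbit p a"
    by (rule permutation_self_in_orbit)
  have "orbit p i = {i}" if "i \<in> {1..n} - A" for i
    using fixed[OF that] by (simp add: orbit_eq_singleton_iff)
  then have "(\<lambda>i. {i}) ` ({1..n} - A) = orbit p ` ({1..n} - A)"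
    by (intro image_cong) auto
  also have "\<dots> \<subseteq> orbit p ` {1..n}"
    by blast
  finally have "insert (orbit p a) ((\<lambda>i. {i}) ` ({1..n} - A)) \<subseteq> orbit p ` {1..n}"
    using assms(2,3) by blast
  then have "card (insert (orbit p a) ((\<lambda>i. {i}) ` ({1..n} - A))) \<le> num_cycles n p"
    unfolding num_cycles_def by (intro card_mono) auto
  moreover have "orbit p a \<notin> (\<lambda>i. {i}) ` ({1..n} - A)"
    using self assms(2) by auto
  ultimately show ?thesis
    by (simp add: card_image)
qed

lemma num_cycles_le:
  assumes "p permutes {1..n}" and "A \<subseteq> orbit p a"
    and fixed: "\<And>i. i \<in> {1..n} - A \<Longrightarrow> p i = i"
  shows "num_cycles n p \<le> Suc (card ({1..n} - A))"
proof -
  have cyclic: "cyclic_on p (orbit p a)"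
    using assms(1) by (rule cyclic_on_orbit) simp
  have "orbit p ` {1..n} \<subseteq> insert (orbit p a) ((\<lambda>i. {i}) ` ({1..n} - A))"
  proof
    fix Q assume "Q \<in> orbit p ` {1..n}"
    then obtain i where i: "i \<in> {1..n}" "Q = orbit p i" by blast
    show "Q \<in> insert (orbit p a) ((\<lambda>i. {i}) ` ({1..n} - A))"
    proof (cases "i \<in> A")
      case True
      then show ?thesis
        using orbit_cyclic_eq3[OF cyclic] assms(2) i(2) by blast
    next
      case False
      then have "Q = {i}"
        using fixed i by (simp add: orbit_eq_singleton_iff)
      then show ?thesis
        using False i(1) by blast
    qed
  qed
  then have "num_cycles n p \<le> card (insert (orbit p a) ((\<lambda>i. {i}) ` ({1..n} - A)))"
    unfolding num_cycles_def by (intro card_mono) auto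
  also have "\<dots> \<le> Suc (card ({1..n} - A))"
    by (simp add: card_insert_if card_image)
  finally show ?thesis .
qed

definition inversion_set :: "nat \<Rightarrow> (nat \<Rightarrow> nat) \<Rightarrow> (nat \<times> nat) set" where
  "inversion_set n p = {(i, j). i \<in> {1..n} \<and> j \<in> {1..n} \<and> i < j \<and> p i > p j}"

lemma inversions_eq_card: "inversions n p = card (inversion_set n p)"
  by (simp add: inversions_def inversion_set_def)

lemma finite_inversion_set: "finite (inversion_set n p)"
  by (rule finite_subset[of _ "{1..n} \<times> {1..n}"]) (auto simp: inversion_set_def)

locale grassmannian_perm =
  fixes n k :: nat and p :: "nat \<Rightarrow> nat"
  assumes permutes: "p permutes {1..n}"
    and k_le: "k \<le> n"
    and descents_subset: "descents n p \<subseteq> {k}"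
begin

lemma in_range: "i \<in> {1..n} \<Longrightarrow> p i \<in> {1..n}"
  using permutes_in_image[OF permutes] by blast

lemma value_eq_iff: "p i = p j \<longleftrightarrow> i = j"
  using permutes_inj[OF permutes] by (simp add: inj_eq)

lemma ascent: "1 \<le> i \<Longrightarrow> i < n \<Longrightarrow> i \<noteq> k \<Longrightarrow> p i < p (Suc i)"
  using descents_subset value_eq_iff[of i "Suc i"] by (force simp: descents_def)

lemma increasing_left: "1 \<le> i \<Longrightarrow> i < j \<Longrightarrow> j \<le> k \<Longrightarrow> p i < p j"
  by (rule lift_Suc_mono_less_ivl[of "{1..<k}"]) (use ascent k_le in auto)

lemma increasing_right: "k < i \<Longrightarrow> i < j \<Longrightarrow> j \<le> n \<Longrightarrow> p i < p j"
  by (rule lift_Suc_mono_less_ivl[of "{k<..<n}"]) (use ascent in auto)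

lemma value_left:
  assumes "1 \<le> i" and "i \<le> k"
  shows "p i = i + card {j\<in>{1..n}. k < j \<and> p j < p i}"
proof -
  have "k < l" if "i \<le> l" and "p l < p i" for l
  proof (rule ccontr)
    assume "\<not> k < l"
    then have "p i \<le> p l"
      using increasing_left[of i l] assms that(1) by (cases "l = i") auto
    then show False
      using that(2) by simp
  qed
  then have below: "{l\<in>{1..n}. p l < p i} = {1..<i} \<union> {j\<in>{1..n}. k < j \<and> p j < p i}"
    using assms k_le increasing_left[of _ i] by (auto simp: not_less)
  have "p i - 1 = card {l\<in>{1..n}. p l < p i}"
    using card_permutes_less[OF permutes, of "p i"] in_range[of i] assms k_le by simp
  also have "\<dots> = card ({1..<i} \<union> {j\<in>{1..n}. k < j \<and> p j < p i})"
    by (simp only: below)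
  also have "\<dots> = (i - 1) + card {j\<in>{1..n}. k < j \<and> p j < p i}"
    using assms by (subst card_Un_disjoint) auto
  moreover have "1 \<le> p i"
    using in_range[of i] assms k_le by simp
  ultimately show ?thesis
    using assms(1) by linarith
qed

lemma value_right:
  assumes "k < j" and "j \<le> n"
  shows "j = p j + card {i\<in>{1..n}. i \<le> k \<and> p j < p i}"
proof -
  have "l \<le> k" if "l \<le> j" and "p j < p l" for l
  proof (rule ccontr)
    assume "\<not> l \<le> k"
    then have "p l \<le> p j"
      using increasing_right[of l j] assms that(1) by (cases "l = j") auto
    then show False
      using that(2) by simp
  qed
  then have above: "{l\<in>{1..n}. p j < p l} = {j<..n} \<union> {i\<in>{1..n}. i \<le> k \<and> p j < p i}"
    using assms increasing_right[of j] by (auto simp: not_less)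
  have "n - p j = card {l\<in>{1..n}. p j < p l}"
    using card_permutes_greater[OF permutes, of "p j"] in_range[of j] assms by simp
  also have "\<dots> = card ({j<..n} \<union> {i\<in>{1..n}. i \<le> k \<and> p j < p i})"
    by (simp only: above)
  also have "\<dots> = (n - j) + card {i\<in>{1..n}. i \<le> k \<and> p j < p i}"
    using assms by (subst card_Un_disjoint) auto
  moreover have "p j \<le> n"
    using in_range[of j] assms by simp
  ultimately show ?thesis
    using assms(2) by linarith
qed

lemma le_value_left: "1 \<le> i \<Longrightarrow> i \<le> k \<Longrightarrow> i \<le> p i"
  by (subst value_left) auto

lemma value_le_right: "k < j \<Longrightarrow> j \<le> n \<Longrightarrow> p j \<le> j"
  by (subst (2) value_right) auto

lemma inversion_straddles: "(i, j) \<in> inversion_set n p \<Longrightarrow> i \<le> k \<and> k < j"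
  using increasing_left[of i j] increasing_right[of i j]
  by (fastforce simp: inversion_set_def not_le)

lemma inversion_set_eq_Sigma_left:
  "inversion_set n p = Sigma {1..k} (\<lambda>i. {j\<in>{1..n}. k < j \<and> p j < p i})"
  using inversion_straddles k_le by (fastforce simp: inversion_set_def)

lemma inversion_set_eq_swap_Sigma_right:
  "inversion_set n p = prod.swap ` Sigma {k<..n} (\<lambda>j. {i\<in>{1..n}. i \<le> k \<and> p j < p i})"
  using inversion_straddles k_le by (fastforce simp: inversion_set_def image_iff)

lemma total_displacement_eq: "total_displacement n p = 2 * inversions n p"
proof -
  have "inversions n p = (\<Sum>i\<in>{1..k}. card {j\<in>{1..n}. k < j \<and> p j < p i})"
    unfolding inversions_eq_card inversion_set_eq_Sigma_left by simp
  also have "\<dots> = (\<Sum>i\<in>{1..k}. p i - i)"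
  proof (rule sum.cong)
    fix i assume "i \<in> {1..k}"
    then have "p i = i + card {j\<in>{1..n}. k < j \<and> p j < p i}"
      by (intro value_left) auto
    then show "card {j\<in>{1..n}. k < j \<and> p j < p i} = p i - i"
      by linarith
  qed simp
  finally have left: "inversions n p = (\<Sum>i\<in>{1..k}. p i - i)" .
  have "inversions n p = (\<Sum>j\<in>{k<..n}. card {i\<in>{1..n}. i \<le> k \<and> p j < p i})"
    unfolding inversions_eq_card inversion_set_eq_swap_Sigma_right
    by (simp add: card_image)
  also have "\<dots> = (\<Sum>j\<in>{k<..n}. j - p j)"
  proof (rule sum.cong)
    fix j assume "j \<in> {k<..n}"
    then have "j = p j + card {i\<in>{1..n}. i \<le> k \<and> p j < p i}"
      by (intro value_right) auto
    then show "card {i\<in>{1..n}. i \<le> k \<and> p j < p i} = j - p j"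
      by linarith
  qed simp
  finally have right: "inversions n p = (\<Sum>j\<in>{k<..n}. j - p j)" .
  have split: "{1..n} = {1..k} \<union> {k<..n}"
    using k_le by auto
  have "total_displacement n p
      = (\<Sum>i\<in>{1..k}. nat \<bar>int (p i) - int i\<bar>) + (\<Sum>j\<in>{k<..n}. nat \<bar>int (p j) - int j\<bar>)"
    unfolding total_displacement_def split by (rule sum.union_disjoint) auto
  also have "\<dots> = (\<Sum>i\<in>{1..k}. p i - i) + (\<Sum>j\<in>{k<..n}. j - p j)"
    using le_value_left value_le_right by (intro arg_cong2[where f = "(+)"] sum.cong) auto
  finally show ?thesis
    using left right by simp
qed

end

text \<open>
  For \<open>x \<le> d < c\<close>, \<open>updown_cycle x d c\<close> is the cycle
  \<open>x \<rightarrow> x+1 \<rightarrow> \<dots> \<rightarrow> d \<rightarrow> c \<rightarrow> c-1 \<rightarrow> \<dots> \<rightarrow> d+1 \<rightarrow> x\<close>; in one-line notation it reads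
  \<open>1 \<dots> x-1, x+1 \<dots> d, c, x, d+1 \<dots> c-1, c+1 \<dots> n\<close>.
\<close>
definition updown_cycle :: "nat \<Rightarrow> nat \<Rightarrow> nat \<Rightarrow> nat \<Rightarrow> nat" where
  "updown_cycle x d c i =
    (if i < x \<or> c < i then i else if i < d then Suc i else if i = d then c
     else if i = Suc d then x else i - 1)"

definition inner_inversions :: "nat \<Rightarrow> nat \<Rightarrow> (nat \<Rightarrow> nat) \<Rightarrow> (nat \<times> nat) set" where
  "inner_inversions n k p = {(i, j) \<in> inversion_set n p. i < k \<and> Suc k < j}"

lemma finite_inner_inversions: "finite (inner_inversions n k p)"
  by (rule finite_subset[OF _ finite_inversion_set]) (auto simp: inner_inversions_def)

locale grassmannian_descent = grassmannian_perm +
  assumes descent: "k \<in> descents n p"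
begin

lemma descent_bounds: "1 \<le> k" "k < n" "p (Suc k) < p k"
  using descent by (auto simp: descents_def)

lemma fixed_above:
  assumes "p k < j"
  shows "p j = j"
proof (cases "j \<le> n")
  case False
  then show ?thesis
    using permutes_not_in[OF permutes] by simp
next
  case True
  have "p l < j" if "1 \<le> l" and "l < j" for l
  proof (cases "l \<le> k")
    case True
    then have "p l \<le> p k"
      using increasing_left[of l k] that(1) by (cases "l = k") auto
    then show ?thesis
      using assms by simp
  next
    case False
    then show ?thesis
      using value_le_right[of l] that \<open>j \<le> n\<close> by simp
  qed
  then have "p ` {1..<j} \<subseteq> {1..<j}"
    using in_range \<open>j \<le> n\<close> by force
  then have "p j \<notin> {1..<j}"
    by (intro inj_invariant_not_in[OF permutes_inj[OF permutes]]) auto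
  moreover have "k < j"
    using le_value_left[of k] descent_bounds assms by simp
  ultimately show ?thesis
    using in_range[of j] value_le_right[of j] \<open>j \<le> n\<close> by fastforce
qed

lemma fixed_below:
  assumes "i < p (Suc k)"
  shows "p i = i"
proof (cases "i = 0")
  case True
  then show ?thesis
    using permutes_not_in[OF permutes] by simp
next
  case False
  have "i < p l" if "i < l" and "l \<le> n" for l
  proof (cases "l \<le> k")
    case True
    then show ?thesis
      using le_value_left[of l] that by simp
  next
    case False
    then have "p (Suc k) \<le> p l"
      using increasing_right[of "Suc k" l] that(2) by (cases "l = Suc k") auto
    then show ?thesis
      using assms by simp
  qed
  then have "p ` {i<..n} \<subseteq> {i<..n}"
    using in_range by force
  then have "p i \<notin> {i<..n}"
    by (intro inj_invariant_not_in[OF permutes_inj[OF permutes]]) auto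
  moreover have "i \<le> k"
    using value_le_right[of "Suc k"] descent_bounds assms by simp
  ultimately show ?thesis
    using in_range[of i] le_value_left[of i] False k_le by fastforce
qed

lemma less_descent_top: "k < p k"
proof (rule ccontr)
  assume "\<not> k < p k"
  then have "p (Suc k) = Suc k"
    by (intro fixed_above) simp
  then show False
    using descent_bounds(3) \<open>\<not> k < p k\<close> by simp
qed

lemma descent_bottom_le: "p (Suc k) \<le> k"
proof (rule ccontr)
  assume "\<not> p (Suc k) \<le> k"
  then have "p k = k"
    by (intro fixed_below) simp
  then show False
    using descent_bounds(3) \<open>\<not> p (Suc k) \<le> k\<close> by simp
qed

lemma fixed_outside: "i \<notin> {p (Suc k)..p k} \<Longrightarrow> p i = i"
  using fixed_above[of i] fixed_below[of i] by force

lemma card_inversions_at_descent: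
  "card {(i, j) \<in> inversion_set n p. i = k \<or> j = Suc k} = p k - p (Suc k)"
proof -
  define row where "row = {k} \<times> {j\<in>{1..n}. k < j \<and> p j < p k}"
  define col where "col = {i\<in>{1..n}. i \<le> k \<and> p (Suc k) < p i} \<times> {Suc k}"
  have "card row = card {j\<in>{1..n}. k < j \<and> p j < p k}"
    by (simp add: row_def card_cartesian_product)
  moreover have "p k = k + card {j\<in>{1..n}. k < j \<and> p j < p k}"
    using descent_bounds k_le by (intro value_left) auto
  ultimately have card_row: "card row = p k - k"
    by linarith
  have "card col = card {i\<in>{1..n}. i \<le> k \<and> p (Suc k) < p i}"
    by (simp add: col_def card_cartesian_product)
  moreover have "Suc k = p (Suc k) + card {i\<in>{1..n}. i \<le> k \<and> p (Suc k) < p i}"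
    using descent_bounds by (intro value_right) auto
  ultimately have card_col: "card col = Suc k - p (Suc k)"
    by linarith
  have "{(i, j) \<in> inversion_set n p. i = k \<or> j = Suc k} = row \<union> col"
    using inversion_straddles descent_bounds by (auto simp: row_def col_def inversion_set_def)
  moreover have "row \<inter> col = {(k, Suc k)}"
    using descent_bounds by (auto simp: row_def col_def)
  moreover have "finite row" "finite col"
    by (simp_all add: row_def col_def)
  ultimately show ?thesis
    using card_Un_Int[of row col] card_row card_col less_descent_top descent_bottom_le by simp
qed

lemma inversions_eq: "inversions n p = (p k - p (Suc k)) + card (inner_inversions n k p)"
proof -
  let ?at_descent = "{(i, j) \<in> inversion_set n p. i = k \<or> j = Suc k}"
  have "inversion_set n p = ?at_descent \<union> inner_inversions n k p"
    using inversion_straddles by (fastforce simp: inner_inversions_def)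
  then have "inversions n p = card (?at_descent \<union> inner_inversions n k p)"
    by (simp only: inversions_eq_card)
  also have "\<dots> = card ?at_descent + card (inner_inversions n k p)"
    by (intro card_Un_disjoint finite_inner_inversions finite_subset[OF _ finite_inversion_set])
      (auto simp: inner_inversions_def)
  finally show ?thesis
    using card_inversions_at_descent by simp
qed

lemma reflection_length_le: "reflection_length n p \<le> p k - p (Suc k)"
proof -
  have range: "1 \<le> p (Suc k)" "p k \<le> n"
    using in_range[of k] in_range[of "Suc k"] descent_bounds by auto
  have "Suc (card ({1..n} - {p (Suc k)..p k})) \<le> num_cycles n p"
  proof (rule num_cycles_ge[OF permutes])
    show "k \<in> {p (Suc k)..p k}"
      using descent_bottom_le less_descent_top by simp
    show "{p (Suc k)..p k} \<subseteq> {1..n}"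
      using range by auto
    show "\<And>i. i \<in> {1..n} - {p (Suc k)..p k} \<Longrightarrow> p i = i"
      by (rule fixed_outside) simp
  qed
  moreover have "card ({1..n} - {p (Suc k)..p k}) = n - (Suc (p k) - p (Suc k))"
    using range by (subst card_Diff_subset) auto
  ultimately show ?thesis
    using range less_descent_top descent_bottom_le unfolding reflection_length_def by linarith
qed

lemma shallow_imp_no_inner_inversions:
  assumes "shallow n p"
  shows "inner_inversions n k p = {}"
proof -
  have "reflection_length n p = inversions n p"
    using assms total_displacement_eq unfolding shallow_def by simp
  then have "card (inner_inversions n k p) = 0"
    using inversions_eq reflection_length_le by simp
  then show ?thesis
    using finite_inner_inversions by simp
qed

lemma value_left_no_inner:
  assumes no_inner: "inner_inversions n k p = {}" and "p (Suc k) \<le> i" and "i < k"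
  shows "p i = Suc i"
proof -
  have "1 \<le> i"
    using in_range[of "Suc k"] descent_bounds assms(2) by auto
  then have "p (Suc k) < p i"
    using le_value_left[of i] value_eq_iff[of i "Suc k"] assms(2,3) by fastforce
  moreover have "\<not> p j < p i" if "Suc k < j" and "j \<le> n" for j
  proof
    assume "p j < p i"
    then have "(i, j) \<in> inner_inversions n k p"
      using that \<open>1 \<le> i\<close> assms(3) by (simp add: inner_inversions_def inversion_set_def)
    then show False
      using no_inner by simp
  qed
  ultimately have "{j\<in>{1..n}. k < j \<and> p j < p i} = {Suc k}"
    using descent_bounds by (auto intro: Suc_lessI)
  then have "i + card {j\<in>{1..n}. k < j \<and> p j < p i} = Suc i"
    by simp
  moreover have "p i = i + card {j\<in>{1..n}. k < j \<and> p j < p i}"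
    using \<open>1 \<le> i\<close> assms(3) by (intro value_left) auto
  ultimately show ?thesis
    by linarith
qed

lemma value_right_no_inner:
  assumes no_inner: "inner_inversions n k p = {}" and "Suc k < j" and "j \<le> p k"
  shows "p j = j - 1"
proof -
  have "j \<le> n"
    using in_range[of k] descent_bounds assms(3) by auto
  then have "p j < p k"
    using value_le_right[of j] value_eq_iff[of j k] assms(2,3) by fastforce
  moreover have "\<not> p j < p i" if "1 \<le> i" and "i < k" for i
  proof
    assume "p j < p i"
    then have "(i, j) \<in> inner_inversions n k p"
      using that \<open>j \<le> n\<close> assms(2) by (simp add: inner_inversions_def inversion_set_def)
    then show False
      using no_inner by simp
  qed
  ultimately have "{i\<in>{1..n}. i \<le> k \<and> p j < p i} = {k}"
    using descent_bounds by (auto simp: le_less)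
  then have "card {i\<in>{1..n}. i \<le> k \<and> p j < p i} = 1"
    by simp
  moreover have "j = p j + card {i\<in>{1..n}. i \<le> k \<and> p j < p i}"
    using \<open>j \<le> n\<close> assms(2) by (intro value_right) auto
  ultimately show ?thesis
    by linarith
qed

lemma eq_updown_cycle:
  assumes no_inner: "inner_inversions n k p = {}"
  shows "p = updown_cycle (p (Suc k)) k (p k)"
proof
  fix i
  show "p i = updown_cycle (p (Suc k)) k (p k) i"
  proof (cases "i < p (Suc k) \<or> p k < i")
    case True
    then have "p i = i"
      by (intro fixed_outside) auto
    with True show ?thesis
      by (simp add: updown_cycle_def)
  next
    case False
    then show ?thesis
      using value_left_no_inner[OF no_inner, of i] value_right_no_inner[OF no_inner, of i]
      by (auto simp: updown_cycle_def not_less)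
  qed
qed

end

context
  fixes x d c n :: nat
  assumes bounds: "1 \<le> x" "x \<le> d" "d < c" "c \<le> n"
begin

lemma updown_cycle_permutes: "updown_cycle x d c permutes {1..n}"
proof (rule bij_imp_permutes)
  have inj: "inj_on (updown_cycle x d c) {1..n}"
    using bounds unfolding inj_on_def updown_cycle_def by (auto split: if_splits)
  moreover have "updown_cycle x d c ` {1..n} \<subseteq> {1..n}"
    using bounds unfolding updown_cycle_def by (auto split: if_splits)
  ultimately show "bij_betw (updown_cycle x d c) {1..n} {1..n}"
    by (simp add: bij_betw_def endo_inj_surj)
  show "updown_cycle x d c i = i" if "i \<notin> {1..n}" for i
    using bounds that by (auto simp: updown_cycle_def)
qed

lemma descents_updown_cycle: "descents n (updown_cycle x d c) = {d}"
  using bounds unfolding descents_def updown_cycle_def by (auto split: if_splits)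

lemma grassmannian_descent_updown_cycle: "grassmannian_descent n d (updown_cycle x d c)"
  using bounds updown_cycle_permutes descents_updown_cycle by unfold_locales auto

lemma inner_inversions_updown_cycle: "inner_inversions n d (updown_cycle x d c) = {}"
  using bounds unfolding inner_inversions_def inversion_set_def updown_cycle_def
  by (auto split: if_splits)

lemma interval_subset_orbit_updown_cycle: "{x..c} \<subseteq> orbit (updown_cycle x d c) x"
proof -
  let ?\<sigma> = "updown_cycle x d c"
  have "permutation ?\<sigma>"
    using updown_cycle_permutes by (auto simp: permutation_permutes)
  then have x: "x \<in> orbit ?\<sigma> x"
    by (rule permutation_self_in_orbit)
  have up: "i \<in> orbit ?\<sigma> x" if "x \<le> i" and "i \<le> d" for i
    using that(1)
  proof (induction i rule: dec_induct)
    case base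
    then show ?case
      by (rule x)
  next
    case (step m)
    then have "?\<sigma> m = Suc m"
      using that(2) bounds by (simp add: updown_cycle_def)
    with step.IH show ?case
      by (metis orbit.step)
  qed
  have c: "c \<in> orbit ?\<sigma> x"
    using orbit.step[OF up[of d]] bounds by (simp add: updown_cycle_def)
  have down: "i \<in> orbit ?\<sigma> x" if "d < i" and "i \<le> c" for i
    using that(2)
  proof (induction i rule: inc_induct)
    case base
    then show ?case
      by (rule c)
  next
    case (step m)
    then have "?\<sigma> (Suc m) = m"
      using that(1) bounds by (simp add: updown_cycle_def)
    with step.IH show ?case
      by (metis orbit.step)
  qed
  show ?thesis
  proof
    fix i assume "i \<in> {x..c}"
    then show "i \<in> orbit ?\<sigma> x"
      using up[of i] down[of i] by (cases "i \<le> d") auto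
  qed
qed

lemma shallow_updown_cycle: "shallow n (updown_cycle x d c)"
proof -
  interpret grassmannian_descent n d "updown_cycle x d c"
    by (rule grassmannian_descent_updown_cycle)
  have "updown_cycle x d c d = c" "updown_cycle x d c (Suc d) = x"
    using bounds by (simp_all add: updown_cycle_def)
  then have inversions: "inversions n (updown_cycle x d c) = c - x"
    using inversions_eq inner_inversions_updown_cycle by simp
  have "num_cycles n (updown_cycle x d c) \<le> Suc (card ({1..n} - {x..c}))"
    using updown_cycle_permutes interval_subset_orbit_updown_cycle
    by (rule num_cycles_le) (use bounds in \<open>auto simp: updown_cycle_def\<close>)
  moreover have "card ({1..n} - {x..c}) = n - (Suc c - x)"
    using bounds by (subst card_Diff_subset) auto
  ultimately have "c - x \<le> reflection_length n (updown_cycle x d c)"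
    using bounds unfolding reflection_length_def by linarith
  then show ?thesis
    using reflection_length_le total_displacement_eq inversions \<open>updown_cycle x d c d = c\<close>
      \<open>updown_cycle x d c (Suc d) = x\<close>
    unfolding shallow_def by simp
qed

end

lemma no_descents_imp_id:
  assumes perm: "p permutes {1..n}" and "descents n p = {}"
  shows "p = id"
proof
  fix i
  interpret left: grassmannian_perm n n p
    using assms by unfold_locales auto
  interpret right: grassmannian_perm n 0 p
    using assms by unfold_locales auto
  show "p i = id i"
  proof (cases "i \<in> {1..n}")
    case True
    then show ?thesis
      using left.le_value_left[of i] right.value_le_right[of i] by simp
  next
    case False
    then show ?thesis
      using permutes_not_in[OF perm] by simp
  qed
qed

lemma shallow_id: "shallow n id"
proof -
  have "inversion_set n id = {}"
    by (auto simp: inversion_set_def)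
  moreover have "orbit id ` {1..n} = (\<lambda>i. {i}) ` {1..n}"
    by (rule image_cong) (simp_all add: orbit_eq_singleton_iff)
  ultimately show ?thesis
    by (simp add: shallow_def reflection_length_def num_cycles_def total_displacement_def
        inversions_eq_card card_image)
qed

definition updown_triples :: "nat \<Rightarrow> (nat \<times> nat \<times> nat) set" where
  "updown_triples n = {(x, d, c). 1 \<le> x \<and> x \<le> d \<and> d < c \<and> c \<le> n}"

lemma shallow_grassmannian_cases:
  assumes perm: "p permutes {1..n}" and "shallow n p" and "grassmannian n p"
  shows "p = id \<or> p \<in> (\<lambda>(x, d, c). updown_cycle x d c) ` updown_triples n"
proof (cases "descents n p = {}")
  case True
  then show ?thesis
    using no_descents_imp_id[OF perm] by simp
next
  case False
  have "finite (descents n p)"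
    by (rule finite_subset[of _ "{1..n}"]) (auto simp: descents_def)
  then obtain k where k: "descents n p = {k}"
    using False \<open>grassmannian n p\<close> by (auto simp: grassmannian_def card_le_Suc0_iff_eq)
  then interpret grassmannian_descent n k p
    using perm by unfold_locales (auto simp: descents_def)
  have "p = updown_cycle (p (Suc k)) k (p k)"
    using eq_updown_cycle shallow_imp_no_inner_inversions \<open>shallow n p\<close> by simp
  moreover have "(p (Suc k), k, p k) \<in> updown_triples n"
    using descent_bottom_le less_descent_top in_range[of k] in_range[of "Suc k"] descent_bounds
    by (auto simp: updown_triples_def)
  ultimately show ?thesis
    by force
qed

lemma shallow_grassmannian_eq:
  "{p. p permutes {1..n} \<and> shallow n p \<and> grassmannian n p}
    = insert id ((\<lambda>(x, d, c). updown_cycle x d c) ` updown_triples n)"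
proof -
  have "id permutes {1..n} \<and> shallow n id \<and> grassmannian n id"
    using permutes_id shallow_id by (simp add: grassmannian_def descents_def)
  moreover have "updown_cycle x d c permutes {1..n} \<and> shallow n (updown_cycle x d c)
      \<and> grassmannian n (updown_cycle x d c)" if "(x, d, c) \<in> updown_triples n" for x d c
    using that updown_cycle_permutes shallow_updown_cycle descents_updown_cycle
    by (simp add: updown_triples_def grassmannian_def)
  ultimately show ?thesis
    using shallow_grassmannian_cases[of _ n] by (intro set_eqI iffI) auto
qed

lemma inj_on_updown_cycle: "inj_on (\<lambda>(x, d, c). updown_cycle x d c) (updown_triples n)"
proof (rule inj_onI)
  fix t t'
  assume "t \<in> updown_triples n" "t' \<in> updown_triples n"
    and "(\<lambda>(x, d, c). updown_cycle x d c) t = (\<lambda>(x, d, c). updown_cycle x d c) t'"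
  moreover obtain x d c x' d' c' where t: "t = (x, d, c)" "t' = (x', d', c')"
    by (cases t, cases t')
  ultimately have eq: "updown_cycle x d c = updown_cycle x' d' c'"
    and bounds: "1 \<le> x" "x \<le> d" "d < c" "c \<le> n" "1 \<le> x'" "x' \<le> d'" "d' < c'" "c' \<le> n"
    by (auto simp: updown_triples_def)
  then have "d = d'"
    using descents_updown_cycle eq by (metis singleton_inject)
  then show "t = t'"
    using fun_cong[OF eq, of d] fun_cong[OF eq, of "Suc d"] bounds t
    by (simp add: updown_cycle_def)
qed

lemma id_notin_updown_cycles: "id \<notin> (\<lambda>(x, d, c). updown_cycle x d c) ` updown_triples n"
proof
  assume "id \<in> (\<lambda>(x, d, c). updown_cycle x d c) ` updown_triples n"
  then obtain x d c where "(x, d, c) \<in> updown_triples n" and "id = updown_cycle x d c"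
    by auto
  then have "updown_cycle x d c d = d" and "x \<le> d" and "d < c"
    by (auto simp: updown_triples_def)
  then show False
    by (simp add: updown_cycle_def)
qed

lemma finite_updown_triples: "finite (updown_triples n)"
  by (rule finite_subset[of _ "{1..n} \<times> {1..n} \<times> {1..n}"]) (auto simp: updown_triples_def)

lemma finite_pairs_le: "finite {(x, d). 1 \<le> x \<and> x \<le> d \<and> d \<le> (n::nat)}"
  by (rule finite_subset[of _ "{1..n} \<times> {1..n}"]) auto

lemma card_pairs_le: "card {(x, d). 1 \<le> x \<and> x \<le> d \<and> d \<le> n} = Suc n choose 2"
proof (induction n)
  case 0
  have empty: "{(x, d). 1 \<le> x \<and> x \<le> d \<and> d \<le> (0::nat)} = {}"
    by auto
  show ?case
    unfolding empty by simp
next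
  case (Suc n)
  have split: "{(x, d). 1 \<le> x \<and> x \<le> d \<and> d \<le> Suc n}
      = {(x, d). 1 \<le> x \<and> x \<le> d \<and> d \<le> n} \<union> (\<lambda>x. (x, Suc n)) ` {1..Suc n}"
    by auto
  have "card {(x, d). 1 \<le> x \<and> x \<le> d \<and> d \<le> Suc n}
      = card {(x, d). 1 \<le> x \<and> x \<le> d \<and> d \<le> n} + card ((\<lambda>x. (x, Suc n)) ` {1..Suc n})"
    unfolding split by (intro card_Un_disjoint finite_pairs_le finite_imageI) auto
  also have "card ((\<lambda>x. (x, Suc n)) ` {1..Suc n}) = Suc n"
    by (subst card_image) (auto simp: inj_on_def)
  finally show ?case
    using Suc.IH by (simp add: numeral_2_eq_2)
qed

lemma card_updown_triples: "card (updown_triples n) = Suc n choose 3"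
proof (induction n)
  case 0
  have "updown_triples 0 = {}"
    by (auto simp: updown_triples_def)
  then show ?case
    by simp
next
  case (Suc n)
  let ?pairs = "{(x, d). 1 \<le> x \<and> x \<le> d \<and> d \<le> n}"
  have split: "updown_triples (Suc n) = updown_triples n \<union> (\<lambda>(x, d). (x, d, Suc n)) ` ?pairs"
    by (auto simp: updown_triples_def le_Suc_eq image_iff)
  have "card (updown_triples (Suc n))
      = card (updown_triples n) + card ((\<lambda>(x, d). (x, d, Suc n)) ` ?pairs)"
    unfolding split
    by (intro card_Un_disjoint finite_updown_triples finite_imageI finite_pairs_le)
      (auto simp: updown_triples_def)
  also have "card ((\<lambda>(x, d). (x, d, Suc n)) ` ?pairs) = card ?pairs"
    by (rule card_image) (auto simp: inj_on_def)
  finally show ?case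
    using Suc.IH card_pairs_le by (simp add: numeral_3_eq_3 numeral_2_eq_2)
qed

text \<open>The count holds for every \<open>n\<close>.\<close>

theorem corollary6p4:
  fixes n :: nat
  assumes "n \<ge> 2"
  shows "card {p. p permutes {1..n} \<and> shallow n p \<and> grassmannian n p} = (n + 1 choose 3) + 1"
  unfolding shallow_grassmannian_eq
  using id_notin_updown_cycles inj_on_updown_cycle card_updown_triples finite_updown_triples
  by (simp add: card_image)

end
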